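(* Consider problem (P) under Assumptions (A1)–(A3). Let $\bar{x}\in\mathbb{R}^n$ be a local minimizer for (P). Then $\bar{x}\in\mathcal{X}$ and $\bar{x}$ is critical for (P).
   Context: Problem (P): minimize $f(x)$ subject to $x\in\mathcal{X}:=\bar{\mathcal{X}}\cap\{x\in\mathbb{R}^n : x_i\in\mathbb{Z}\ \forall i\in\mathcal{I}\}$, where $\bar{\mathcal{X}}\subseteq\mathbb{R}^n$ is a closed convex polyhedral set, $\mathcal{I}\subseteq\{1,\dots,n\}$, $\mathcal{X}\neq\emptyset$, and $f:\mathbb{R}^n\to\mathbb{R}$. Partition $x=(u,z)$, where $u$ collects the components with indices not in $\mathcal{I}$ (real-valued) and $z$ those with indices in $\mathcal{I}$ (integer-valued). Standing assumptions: (A1) $f$ is continuously differentiable and $\nabla f$ is locally Lipschitz continuous; (A2) $f(u,z)=f_1(u)+\langle f_2,z\rangle$ for a smooth function $f_1$ and a fixed vector $f_2$; (A3) the set $\{z : (u,z)\in\mathcal{X}\}$ of feasible integer parts is bounded. Partial localization: $\|x\|_{PL}$ denotes a polyhedral norm (the $\ell_1$-norm $\sum_{i\notin\mathcal{I}}|x_i|$ or the $\ell_\infty$-norm $\max_{i\notin\mathcal{I}}|x_i|$) applied only to the components with indices not in $\mathcal{I}$; it is a seminorm. The closed PL-ball is $\mathbb{B}_{PL}(x,\Delta):=\{w\in\mathbb{R}^n: \|w-x\|_{PL}\le\Delta\}$. Local minimizer: $\bar x\in\mathcal{X}$ such that there is $\Delta>0$ with $f(\bar x)\le f(x)$ for all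 $x\in\mathcal{X}\cap\mathbb{B}_{PL}(\bar x,\Delta)$. Criticality measure: for $x\in\mathcal{X}$ and $\Delta\ge 0$, $\Psi(x;\Delta):=\max\{\langle\nabla f(x),x-w\rangle : w\in\mathcal{X}\cap\mathbb{B}_{PL}(x,\Delta)\}$ (so $\Psi\ge0$). A point $\bar x\in\mathcal{X}$ is $\Delta$-critical if $\Psi(\bar x;\Delta)=0$, and critical if it is $\Delta$-critical for some $\Delta>0$. *)

theory Defs
  imports "HOL-Analysis.Analysis"
begin

text \<open>Vectors of R^n are modelled as real^'n for a finite index type 'n.
  I is the set of integer-constrained indices.\<close>

definition feasible_set :: "(real^'n) set \<Rightarrow> 'n set \<Rightarrow> (real^'n) set" where
  "feasible_set Xbar I = Xbar \<inter> {x. \<forall>i\<in>I. x $ i \<in> \<int>}"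

definition pl_norm1 :: "'n::finite set \<Rightarrow> real^'n \<Rightarrow> real" where
  "pl_norm1 I x = (\<Sum>i\<in>-I. \<bar>x $ i\<bar>)"

definition pl_norminf :: "'n::finite set \<Rightarrow> real^'n \<Rightarrow> real" where
  "pl_norminf I x = Max (insert 0 ((\<lambda>i. \<bar>x $ i\<bar>) ` (-I)))"

definition pl_ball :: "(real^'n \<Rightarrow> real) \<Rightarrow> real^'n \<Rightarrow> real \<Rightarrow> (real^'n) set" where
  "pl_ball N x \<Delta> = {w. N (w - x) \<le> \<Delta>}"

definition local_minimizer ::
  "(real^'n \<Rightarrow> real) \<Rightarrow> (real^'n) set \<Rightarrow> (real^'n \<Rightarrow> real) \<Rightarrow> real^'n \<Rightarrow> bool" where
  "local_minimizer f X N xb \<longleftrightarrow> xb \<in> X \<and>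
     (\<exists>\<Delta>>0. \<forall>x\<in>X \<inter> pl_ball N xb \<Delta>. f xb \<le> f x)"

text \<open>Criticality measure; g is the gradient of f. The maximum in the paper is rendered as Sup.\<close>
definition Psi ::
  "(real^'n \<Rightarrow> real^'n) \<Rightarrow> (real^'n) set \<Rightarrow> (real^'n \<Rightarrow> real) \<Rightarrow> real^'n \<Rightarrow> real \<Rightarrow> real" where
  "Psi g X N x \<Delta> = Sup ((\<lambda>w. inner (g x) (x - w)) ` (X \<inter> pl_ball N x \<Delta>))"

definition Delta_critical ::
  "(real^'n \<Rightarrow> real^'n) \<Rightarrow> (real^'n) set \<Rightarrow> (real^'n \<Rightarrow> real) \<Rightarrow> real^'n \<Rightarrow> real \<Rightarrow> bool" where
  "Delta_critical g X N x \<Delta> \<longleftrightarrow> x \<in> X \<and> Psi g X N x \<Delta> = 0"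

definition critical ::
  "(real^'n \<Rightarrow> real^'n) \<Rightarrow> (real^'n) set \<Rightarrow> (real^'n \<Rightarrow> real) \<Rightarrow> real^'n \<Rightarrow> bool" where
  "critical g X N x \<longleftrightarrow> (\<exists>\<Delta>>0. Delta_critical g X N x \<Delta>)"

end

theory Submission
  imports Defs
begin

text \<open>Split the feasible set into fibres of points sharing an integer part \<open>p\<close>, and let
  \<open>q\<close> agree with \<open>p\<close> on \<open>I\<close> and with \<open>xb\<close> elsewhere, so that \<open>q\<close> is at PL-distance
  0 from \<open>xb\<close>. If \<open>q \<notin> Xbar\<close>, the closed fibre stays PL-away from \<open>xb\<close>. Otherwise \<open>q\<close>
  is feasible, so \<open>f q \<ge> f xb\<close>; as \<open>f\<close> is affine in the integer variables, \<open>\<nabla>f(xb)\<close>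
  has slope \<open>f q - f xb\<close> along \<open>q - xb\<close>. If this slope is positive it dominates
  \<open>\<langle>\<nabla>f(xb), q - w\<rangle>\<close> for all \<open>w\<close> PL-close to \<open>xb\<close>. If it is zero, \<open>f\<close> agrees on the
  segments from \<open>xb\<close> and from \<open>q\<close> towards \<open>w\<close>; the latter is feasible by convexity, so
  \<open>\<langle>\<nabla>f(xb), w - xb\<rangle> \<ge> 0\<close> by local minimality. By (A3) there are finitely many fibres,
  hence a common radius.\<close>

lemma finite_bounded_integral_vectors:
  fixes S :: "(real^'n) set"
  assumes "bounded S" and integral: "\<And>x i. x \<in> S \<Longrightarrow> x $ i \<in> \<int>"
  shows "finite S"
proof -
  obtain B where B: "\<And>x. x \<in> S \<Longrightarrow> norm x \<le> B"
    using assms(1) bounded_iff by blast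
  let ?K = "{k \<in> \<int>. \<bar>k\<bar> \<le> B}"
  have "S \<subseteq> vec_lambda ` (\<Pi>\<^sub>E i\<in>UNIV. ?K)"
  proof
    fix x assume "x \<in> S"
    then have "vec_nth x \<in> (\<Pi>\<^sub>E i\<in>UNIV. ?K)"
      using integral B component_le_norm_cart order_trans by fastforce
    then show "x \<in> vec_lambda ` (\<Pi>\<^sub>E i\<in>UNIV. ?K)"
      by (rule rev_image_eqI) simp
  qed
  moreover have "finite (\<Pi>\<^sub>E i\<in>(UNIV::'n set). ?K)"
    by (intro finite_PiE finite_abs_int_segment) simp
  ultimately show ?thesis
    using finite_subset by blast
qed

lemma has_derivative_ge_if_ray_ge:
  fixes f :: "'a::real_normed_vector \<Rightarrow> real"
  assumes deriv: "(f has_derivative f') (at x)"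
    and ray: "\<And>t. 0 < t \<Longrightarrow> t \<le> 1 \<Longrightarrow> t * c \<le> f (x + t *\<^sub>R v) - f x"
  shows "c \<le> f' v"
proof -
  have "((\<lambda>t. f (x + t *\<^sub>R v)) has_derivative (\<lambda>t. f' (t *\<^sub>R v))) (at 0)"
  proof -
    have "((\<lambda>t. x + t *\<^sub>R v) has_derivative (\<lambda>t. t *\<^sub>R v)) (at 0)"
      by (auto intro!: derivative_eq_intros)
    moreover have "(f has_derivative f') (at (x + 0 *\<^sub>R v))"
      using deriv by simp
    ultimately show ?thesis
      using has_derivative_compose by (fastforce simp: o_def)
  qed
  moreover have "f' (t *\<^sub>R v) = f' v * t" for t
    using linear_scale[OF has_derivative_linear[OF deriv]] by (simp add: mult.commute)
  ultimately have "((\<lambda>t. f (x + t *\<^sub>R v)) has_real_derivative f' v) (at 0)"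
    by (simp add: has_field_derivative_def)
  then have "((\<lambda>t. (f (x + t *\<^sub>R v) - f x) / t) \<longlongrightarrow> f' v) (at_right 0)"
    by (auto simp: has_field_derivative_iff intro: filterlim_mono at_le)
  moreover have "\<forall>\<^sub>F t in at_right 0. c \<le> (f (x + t *\<^sub>R v) - f x) / t"
    unfolding eventually_at_right_field
    by (auto intro!: exI[of _ 1] ray simp: pos_le_divide_eq mult.commute)
  ultimately show ?thesis
    by (rule tendsto_lowerbound) simp
qed

lemma pl_norm_mono:
  assumes "N = pl_norm1 I \<or> N = pl_norminf I"
    and "\<And>i. i \<notin> I \<Longrightarrow> \<bar>x $ i\<bar> \<le> \<bar>y $ i\<bar>"
  shows "N x \<le> N y"
  using assms(1)
proof
  assume "N = pl_norm1 I"
  then show ?thesis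
    unfolding pl_norm1_def using assms(2) by (auto intro!: sum_mono)
next
  assume N: "N = pl_norminf I"
  have "\<bar>x $ i\<bar> \<le> Max (insert 0 ((\<lambda>i. \<bar>y $ i\<bar>) ` (- I)))" if "i \<notin> I" for i
    using that assms(2)[OF that] by (auto intro: order_trans Max_ge)
  then show ?thesis
    unfolding N pl_norminf_def by (auto intro!: Max.boundedI Max_ge)
qed

lemma pl_norm_zero:
  assumes "N = pl_norm1 I \<or> N = pl_norminf I"
  shows "N 0 = 0"
  using assms unfolding pl_norm1_def pl_norminf_def by (auto simp: image_constant_conv)

lemma abs_component_le_pl_norm:
  assumes "N = pl_norm1 I \<or> N = pl_norminf I" and "i \<notin> I"
  shows "\<bar>x $ i\<bar> \<le> N x"
  using assms member_le_sum[of i "-I" "\<lambda>i. \<bar>x $ i\<bar>"]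
  unfolding pl_norm1_def pl_norminf_def by (auto simp: Max_ge_iff)

lemma norm_le_card_pl_norm:
  fixes x :: "real^'n"
  assumes pl: "N = pl_norm1 I \<or> N = pl_norminf I" and "\<And>i. i \<in> I \<Longrightarrow> x $ i = 0"
  shows "norm x \<le> real CARD('n) * N x"
proof -
  have "\<bar>x $ i\<bar> \<le> N x" for i
    using assms abs_component_le_pl_norm[OF pl] pl_norm_mono[OF pl, of 0 x] pl_norm_zero[OF pl]
    by (cases "i \<in> I") auto
  then have "(\<Sum>i\<in>UNIV. \<bar>x $ i\<bar>) \<le> real CARD('n) * N x"
    using sum_bounded_above[of UNIV "\<lambda>i. \<bar>x $ i\<bar>" "N x"] by simp
  then show ?thesis
    using norm_le_l1_cart order_trans by blast
qed

lemma Psi_eq_0I: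
  assumes "x \<in> X" and "N 0 \<le> \<Delta>"
    and "\<And>w. w \<in> X \<Longrightarrow> N (w - x) \<le> \<Delta> \<Longrightarrow> inner (g x) (x - w) \<le> 0"
  shows "Psi g X N x \<Delta> = 0"
  unfolding Psi_def
proof (rule cSup_eq_maximum)
  show "0 \<in> (\<lambda>w. inner (g x) (x - w)) ` (X \<inter> pl_ball N x \<Delta>)"
    using assms(1,2) by (auto simp: pl_ball_def intro!: image_eqI[of _ _ x])
qed (use assms(3) in \<open>auto simp: pl_ball_def\<close>)

definition vec_override_on :: "'n set \<Rightarrow> 'a^'n \<Rightarrow> 'a^'n \<Rightarrow> 'a^'n" where
  "vec_override_on A x p = (\<chi> i. if i \<in> A then p $ i else x $ i)"

locale partially_linear_program =
  fixes f :: "real^'n \<Rightarrow> real" and g :: "real^'n \<Rightarrow> real^'n"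
    and Xbar :: "(real^'n) set" and I :: "'n set" and N :: "real^'n \<Rightarrow> real"
    and f1 :: "real^'n \<Rightarrow> real" and a :: "real^'n"
  assumes convex_Xbar: "convex Xbar" and closed_Xbar: "closed Xbar"
    and pl_norm: "N = pl_norm1 I \<or> N = pl_norminf I"
    and gradient: "\<And>x. (f has_derivative (\<lambda>h. inner (g x) h)) (at x)"
    and f1_cong: "\<And>x y. (\<And>i. i \<notin> I \<Longrightarrow> x $ i = y $ i) \<Longrightarrow> f1 x = f1 y"
    and f_split: "\<And>x. f x = f1 x + inner a x"
    and a_outside: "\<And>i. i \<notin> I \<Longrightarrow> a $ i = 0"
begin

abbreviation "X \<equiv> feasible_set Xbar I"

lemma f_diff_eq_inner:
  assumes "\<And>i. i \<notin> I \<Longrightarrow> x $ i = y $ i"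
  shows "f y - f x = inner a (y - x)"
  using f1_cong[OF assms] f_split[of x] f_split[of y] by (simp add: inner_diff_right)

lemma gradient_inner_eq:
  assumes "\<And>i. i \<notin> I \<Longrightarrow> v $ i = 0"
  shows "inner (g x) v = inner a v"
proof -
  have ray: "f (x + t *\<^sub>R u) - f x = t * inner a u" if "\<And>i. i \<notin> I \<Longrightarrow> u $ i = 0" for t u
    using f_diff_eq_inner[of x "x + t *\<^sub>R u"] that by simp
  have "inner a v \<le> inner (g x) v"
    by (rule has_derivative_ge_if_ray_ge[OF gradient], subst ray) (use assms in auto)
  moreover have "inner a (- v) \<le> inner (g x) (- v)"
    by (rule has_derivative_ge_if_ray_ge[OF gradient], subst ray) (use assms in auto)
  ultimately show ?thesis
    by simp
qed

lemma norm_diff_override_le: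
  assumes "\<forall>i\<in>I. w $ i = p $ i"
  shows "norm (w - vec_override_on I x p) \<le> real CARD('n) * N (w - x)"
proof -
  have "norm (w - vec_override_on I x p) \<le> real CARD('n) * N (w - vec_override_on I x p)"
    using assms by (intro norm_le_card_pl_norm[OF pl_norm]) (simp add: vec_override_on_def)
  also have "\<dots> \<le> real CARD('n) * N (w - x)"
    by (intro mult_left_mono pl_norm_mono[OF pl_norm]) (auto simp: vec_override_on_def)
  finally show ?thesis .
qed

lemma fiber_far_if_base_infeasible:
  assumes "vec_override_on I xb p \<notin> Xbar"
  shows "\<exists>\<delta>>0. \<forall>w\<in>Xbar. (\<forall>i\<in>I. w $ i = p $ i) \<longrightarrow> \<delta> < N (w - xb)"
proof -
  let ?q = "vec_override_on I xb p"
  define F where "F = Xbar \<inter> (\<Inter>i\<in>I. {w. w $ i = p $ i})"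
  have "closed F"
    unfolding F_def by (intro closed_Int closed_Xbar closed_INT ballI closed_Collect_eq continuous_intros)
  moreover have "?q \<notin> F"
    using assms unfolding F_def by auto
  ultimately obtain e where e: "e > 0" "ball ?q e \<subseteq> - F"
    using open_contains_ball[of "- F"] by (auto simp: open_Compl)
  show ?thesis
  proof (intro exI[of _ "e / (2 * CARD('n))"] conjI ballI impI)
    show "e / (2 * CARD('n)) > 0"
      using e by simp
    fix w assume w: "w \<in> Xbar" "\<forall>i\<in>I. w $ i = p $ i"
    then have "w \<notin> ball ?q e"
      using e unfolding F_def by auto
    then have "e \<le> norm (w - ?q)"
      by (simp add: dist_norm norm_minus_commute)
    also have "\<dots> \<le> real CARD('n) * N (w - xb)"
      using w(2) by (rule norm_diff_override_le)
    finally show "e / (2 * CARD('n)) < N (w - xb)"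
      using e by (simp add: field_simps)
  qed
qed

lemma fiber_critical_if_base_higher:
  assumes "f xb < f (vec_override_on I xb p)"
  shows "\<exists>\<delta>>0. \<forall>w. (\<forall>i\<in>I. w $ i = p $ i) \<longrightarrow> N (w - xb) \<le> \<delta> \<longrightarrow> inner (g xb) (xb - w) \<le> 0"
proof -
  let ?q = "vec_override_on I xb p" and ?G = "g xb"
  define c where "c = f ?q - f xb"
  define K where "K = 1 + norm ?G * CARD('n)"
  have "c > 0" "K > 0"
    using assms by (auto simp: c_def K_def add_pos_nonneg)
  have slope: "inner ?G (?q - xb) = c"
    using gradient_inner_eq[of "?q - xb"] f_diff_eq_inner[of xb ?q]
    by (simp add: c_def vec_override_on_def)
  show ?thesis
  proof (intro exI[of _ "c / K"] conjI allI impI)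
    show "c / K > 0"
      using \<open>c > 0\<close> \<open>K > 0\<close> by simp
    fix w assume w: "\<forall>i\<in>I. w $ i = p $ i" "N (w - xb) \<le> c / K"
    have "inner ?G (xb - w) = inner ?G (?q - w) - c"
      using slope by (simp add: inner_diff_right)
    also have "\<dots> \<le> norm ?G * norm (w - ?q) - c"
      using norm_cauchy_schwarz[of ?G "?q - w"] by (simp add: norm_minus_commute)
    also have "\<dots> \<le> norm ?G * (CARD('n) * (c / K)) - c"
      using norm_diff_override_le[OF w(1), of xb] mult_left_mono[OF w(2), of "CARD('n)"]
      by (intro diff_right_mono mult_left_mono) auto
    also have "\<dots> \<le> 0"
      using \<open>c > 0\<close> \<open>K > 0\<close> by (simp add: K_def field_simps)
    finally show "inner ?G (xb - w) \<le> 0" .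
  qed
qed

lemma fiber_critical_if_base_level:
  assumes minimal: "\<And>x. x \<in> X \<Longrightarrow> N (x - xb) \<le> D \<Longrightarrow> f xb \<le> f x"
    and base: "vec_override_on I xb p \<in> Xbar" "\<forall>i\<in>I. p $ i \<in> \<int>"
    and level: "f (vec_override_on I xb p) = f xb"
    and w: "w \<in> X" "\<forall>i\<in>I. w $ i = p $ i" "N (w - xb) \<le> D"
  shows "inner (g xb) (xb - w) \<le> 0"
proof -
  let ?q = "vec_override_on I xb p"
  have "0 \<le> inner (g xb) (w - xb)"
  proof (rule has_derivative_ge_if_ray_ge[OF gradient])
    fix t :: real assume t: "0 < t" "t \<le> 1"
    define y where "y = ?q + t *\<^sub>R (w - ?q)"
    have "y = (1 - t) *\<^sub>R ?q + t *\<^sub>R w"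
      by (simp add: y_def algebra_simps)
    then have "y \<in> Xbar"
      using convex_Xbar base(1) w(1) t by (auto simp: feasible_set_def intro: convexD)
    moreover have "\<forall>i\<in>I. y $ i \<in> \<int>"
      using base(2) w(2) by (simp add: y_def vec_override_on_def)
    moreover have "N (y - xb) \<le> N (w - xb)"
      using t by (intro pl_norm_mono[OF pl_norm])
        (simp add: y_def vec_override_on_def abs_mult mult_left_le_one_le flip: right_diff_distrib)
    ultimately have "f xb \<le> f y"
      using minimal w(3) by (simp add: feasible_set_def)
    also have "f y = f (xb + t *\<^sub>R (w - xb))"
    proof -
      have "y - (xb + t *\<^sub>R (w - xb)) = (1 - t) *\<^sub>R (?q - xb)"
        by (simp add: y_def algebra_simps)
      moreover have "inner a (?q - xb) = 0"
        using f_diff_eq_inner[of xb ?q] level by (simp add: vec_override_on_def)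
      ultimately show ?thesis
        using f_diff_eq_inner[of "xb + t *\<^sub>R (w - xb)" y]
        by (simp add: y_def vec_override_on_def algebra_simps)
    qed
    finally show "t * 0 \<le> f (xb + t *\<^sub>R (w - xb)) - f xb"
      by simp
  qed
  then show ?thesis
    by (simp add: inner_diff_right)
qed

lemma fiber_critical:
  assumes minimal: "\<And>x. x \<in> X \<Longrightarrow> N (x - xb) \<le> D \<Longrightarrow> f xb \<le> f x" and "D > 0"
    and integral: "\<forall>i\<in>I. p $ i \<in> \<int>"
  shows "\<exists>\<delta>>0. \<forall>w\<in>X. (\<forall>i\<in>I. w $ i = p $ i) \<longrightarrow> N (w - xb) \<le> \<delta> \<longrightarrow> inner (g xb) (xb - w) \<le> 0"
proof (cases "vec_override_on I xb p \<in> Xbar")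
  case False
  then show ?thesis
    using fiber_far_if_base_infeasible by (fastforce simp: feasible_set_def)
next
  case True
  let ?q = "vec_override_on I xb p"
  have "?q \<in> X"
    using True integral by (simp add: feasible_set_def vec_override_on_def)
  moreover have "N (?q - xb) \<le> N 0"
    by (intro pl_norm_mono[OF pl_norm]) (simp add: vec_override_on_def)
  ultimately have "f xb \<le> f ?q"
    using minimal \<open>D > 0\<close> pl_norm_zero[OF pl_norm] by simp
  then consider "f xb < f ?q" | "f ?q = f xb"
    by linarith
  then show ?thesis
  proof cases
    case 1
    then show ?thesis
      using fiber_critical_if_base_higher by blast
  next
    case 2
    then show ?thesis
      using fiber_critical_if_base_level[OF minimal True integral] \<open>D > 0\<close> by blast
  qed
qed

lemma critical_if_local_minimizer:
  assumes "local_minimizer f X N xb" and "bounded (vec_override_on I 0 ` X)"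
  shows "critical g X N xb"
proof -
  obtain D where "xb \<in> X" "D > 0" and minimal: "\<And>x. x \<in> X \<Longrightarrow> N (x - xb) \<le> D \<Longrightarrow> f xb \<le> f x"
    using assms(1) unfolding local_minimizer_def pl_ball_def by auto
  let ?P = "vec_override_on I 0"
  let ?good = "\<lambda>p \<delta>. \<forall>w\<in>X. (\<forall>i\<in>I. w $ i = p $ i) \<longrightarrow> N (w - xb) \<le> \<delta> \<longrightarrow> inner (g xb) (xb - w) \<le> 0"
  have "finite (?P ` X)"
    using assms(2) by (rule finite_bounded_integral_vectors) (auto simp: feasible_set_def vec_override_on_def)
  moreover have "\<forall>\<^sub>F \<delta> in at_right 0. ?good p \<delta>" if "p \<in> ?P ` X" for p
  proof -
    have "\<forall>i\<in>I. p $ i \<in> \<int>"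
      using that by (auto simp: feasible_set_def vec_override_on_def)
    then obtain \<delta> where "\<delta> > 0" "?good p \<delta>"
      using fiber_critical[OF minimal \<open>D > 0\<close>] by blast
    then show ?thesis
      unfolding eventually_at_right_field by (force intro!: exI[of _ \<delta>])
  qed
  ultimately have "\<forall>\<^sub>F \<delta> in at_right 0. (\<forall>p\<in>?P ` X. ?good p \<delta>) \<and> \<delta> > 0"
    by (intro eventually_conj eventually_ball_finite eventually_at_right_less) auto
  then obtain \<Delta> where "\<Delta> > 0" and good: "\<forall>p\<in>?P ` X. ?good p \<Delta>"
    using eventually_happens'[OF trivial_limit_at_right_real] by blast
  have "Psi g X N xb \<Delta> = 0"
  proof (rule Psi_eq_0I)
    fix w assume "w \<in> X" "N (w - xb) \<le> \<Delta>"
    then show "inner (g xb) (xb - w) \<le> 0"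
      using good by (auto simp: vec_override_on_def)
  qed (use \<open>xb \<in> X\<close> \<open>\<Delta> > 0\<close> pl_norm_zero[OF pl_norm] in auto)
  then show ?thesis
    using \<open>xb \<in> X\<close> \<open>\<Delta> > 0\<close> unfolding critical_def Delta_critical_def by auto
qed

end

theorem mainTheorem1:
  fixes f :: "real^'n \<Rightarrow> real"
    and g :: "real^'n \<Rightarrow> real^'n"
    and Xbar :: "(real^'n) set"
    and I :: "'n set"
    and N :: "real^'n \<Rightarrow> real"
    and xb :: "real^'n"
  assumes poly: "polyhedron Xbar"
    and nonempty: "feasible_set Xbar I \<noteq> {}"
    and PL: "N = pl_norm1 I \<or> N = pl_norminf I"
    and A1_grad: "\<And>x. (f has_derivative (\<lambda>h. inner (g x) h)) (at x)"
    and A1_lip: "\<And>x. \<exists>e>0. \<exists>L. \<forall>y\<in>ball x e. \<forall>z\<in>ball x e. norm (g y - g z) \<le> L * dist y z"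
    and A2: "\<exists>f1 f2. (\<forall>x y. (\<forall>i. i \<notin> I \<longrightarrow> x $ i = y $ i) \<longrightarrow> f1 x = f1 y)
               \<and> (\<forall>x. f1 differentiable (at x))
               \<and> (\<forall>x. f x = f1 x + (\<Sum>i\<in>I. f2 $ i * x $ i))"
    and A3: "bounded ((\<lambda>x. \<chi> i. if i \<in> I then x $ i else 0) ` feasible_set Xbar I)"
    and locmin: "local_minimizer f (feasible_set Xbar I) N xb"
  shows "xb \<in> feasible_set Xbar I \<and> critical g (feasible_set Xbar I) N xb"
proof -
  obtain f1 f2 where f1_cong: "\<And>x y. (\<forall>i. i \<notin> I \<longrightarrow> x $ i = y $ i) \<Longrightarrow> f1 x = f1 y"
    and f_eq: "\<And>x. f x = f1 x + (\<Sum>i\<in>I. f2 $ i * x $ i)"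
    using A2 by blast
  define a where "a = vec_override_on I 0 f2"
  have "(\<Sum>i\<in>I. f2 $ i * x $ i) = inner a x" for x
    unfolding inner_vec_def a_def vec_override_on_def
    by (simp add: if_distrib[where f="\<lambda>c. c * _"] sum.If_cases)
  then interpret partially_linear_program f g Xbar I N f1 a
    using poly polyhedron_imp_closed polyhedron_imp_convex PL A1_grad f1_cong f_eq
    by unfold_locales (auto simp: a_def vec_override_on_def)
  have "vec_override_on I (0::real^'n) = (\<lambda>x. \<chi> i. if i \<in> I then x $ i else 0)"
    by (simp add: vec_override_on_def fun_eq_iff)
  then have "critical g (feasible_set Xbar I) N xb"
    using locmin A3 by (intro critical_if_local_minimizer) simp_all
  then show ?thesis
    using locmin unfolding local_minimizer_def by blast
qed

end
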